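(* Let $\|\cdot\|$ be a polyhedral seminorm on $\mathbb{R}^n$, let $\mathcal{B}=\{x:\|x\|\le1\}$ and $p^*=W(\mathcal{B})$. Then there is a set $\Sigma$ of real $n\times n$ matrices for which $\|\cdot\|$ is nonincreasing and such that (i) every infinite periodic product of matrices from $\Sigma$ with period smaller than $p^*$ contracts $\|\cdot\|$, and (ii) not every left-infinite product of matrices from $\Sigma$ contracts $\|\cdot\|$.
   Context: A seminorm is polyhedral if its unit ball is a polyhedron (defined by finitely many linear inequalities). $\|\cdot\|$ is nonincreasing for $\Sigma$ if $\|Ax\|\le\|x\|$ for all $x$ and all $A\in\Sigma$. A left-infinite product $\dots A_{\sigma(2)}A_{\sigma(1)}$ contracts $\|\cdot\|$ if there is $t$ with $A_{\sigma(t)}\cdots A_{\sigma(1)}\mathcal{B}\subset\mathrm{int}(\mathcal{B})$; it is periodic with period $p$ if $\sigma(i+p)=\sigma(i)$ for all $i$. For a polyhedron $\mathcal{Q}$, a face is $\mathcal{Q}$, $\varnothing$, or a nonempty set $\mathcal{Q}\cap\{x:b^\top x=c\}$ where $b^\top x\le c$ on $\mathcal{Q}$; a proper face is a face other than $\mathcal{Q},\varnothing$. For centrally symmetric $\mathcal{Q}$, a double-face is $F\cup-F$ with $F$ a proper face; the lattice of double-faces is the set of double-faces together with $\mathcal{Q}$ and $\varnothing$, ordered by inclusion; $W(\mathcal{Q})$ is the maximum size of an antichain (set of pairwise incomparable elements) in this lattice. *)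

theory Defs
  imports "HOL-Analysis.Analysis"
begin

definition is_seminorm :: "('a::real_vector \<Rightarrow> real) \<Rightarrow> bool" where
  "is_seminorm N \<longleftrightarrow>
     (\<forall>x y. N (x + y) \<le> N x + N y) \<and> (\<forall>c x. N (c *\<^sub>R x) = \<bar>c\<bar> * N x)"

definition unit_ball :: "('a \<Rightarrow> real) \<Rightarrow> 'a set" where
  "unit_ball N = {x. N x \<le> 1}"

definition polyhedral_seminorm :: "('a::euclidean_space \<Rightarrow> real) \<Rightarrow> bool" where
  "polyhedral_seminorm N \<longleftrightarrow> is_seminorm N \<and> polyhedron (unit_ball N)"

definition poly_face :: "'a::euclidean_space set \<Rightarrow> 'a set \<Rightarrow> bool" where
  "poly_face Q F \<longleftrightarrow> F = Q \<or> F = {} \<or>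
     (F \<noteq> {} \<and> (\<exists>b c. (\<forall>x\<in>Q. b \<bullet> x \<le> c) \<and> F = Q \<inter> {x. b \<bullet> x = c}))"

definition proper_face :: "'a::euclidean_space set \<Rightarrow> 'a set \<Rightarrow> bool" where
  "proper_face Q F \<longleftrightarrow> poly_face Q F \<and> F \<noteq> Q \<and> F \<noteq> {}"

definition double_face_lattice :: "'a::euclidean_space set \<Rightarrow> 'a set set" where
  "double_face_lattice Q = {F \<union> uminus ` F | F. proper_face Q F} \<union> {Q, {}}"

definition is_antichain :: "'a set set \<Rightarrow> bool" where
  "is_antichain A \<longleftrightarrow> (\<forall>X\<in>A. \<forall>Y\<in>A. X \<noteq> Y \<longrightarrow> \<not> X \<subseteq> Y)"

definition W :: "'a::euclidean_space set \<Rightarrow> nat" where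
  "W Q = Max {card A | A. A \<subseteq> double_face_lattice Q \<and> is_antichain A}"

text \<open>Left-infinite products: M i is the (i+1)-st factor; lprod M t = M (t-1) ** ... ** M 0.\<close>
primrec lprod :: "(nat \<Rightarrow> real^'n^'n) \<Rightarrow> nat \<Rightarrow> real^'n^'n" where
  "lprod M 0 = mat 1"
| "lprod M (Suc t) = M t ** lprod M t"

definition nonincreasing_for :: "(real^'n \<Rightarrow> real) \<Rightarrow> (real^'n^'n) set \<Rightarrow> bool" where
  "nonincreasing_for N \<Sigma> \<longleftrightarrow> (\<forall>x. \<forall>A\<in>\<Sigma>. N (A *v x) \<le> N x)"

definition contracts :: "(nat \<Rightarrow> real^'n^'n) \<Rightarrow> (real^'n \<Rightarrow> real) \<Rightarrow> bool" where
  "contracts M N \<longleftrightarrow>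
     (\<exists>t. (\<lambda>x. lprod M t *v x) ` unit_ball N \<subseteq> interior (unit_ball N))"

definition periodic_with :: "(nat \<Rightarrow> 'b) \<Rightarrow> nat \<Rightarrow> bool" where
  "periodic_with M p \<longleftrightarrow> (\<forall>i. M (i + p) = M i)"

end

theory Submission
  imports Defs
begin

text \<open>Take an antichain of \<open>m = W(\<B>)\<close> double-faces \<open>F\<^sub>k \<union> -F\<^sub>k\<close>, a functional \<open>g\<^sub>k\<close>
  with \<open>|g\<^sub>k x| \<le> \<parallel>x\<parallel>\<close> and \<open>F\<^sub>k = \<B> \<inter> {g\<^sub>k = 1}\<close>, and a point \<open>u\<^sub>k\<close> in the relative interior
  of \<open>F\<^sub>k\<close>. Incomparability of the double-faces forces \<open>|g\<^sub>j u\<^sub>k| < 1\<close> for \<open>j \<noteq> k\<close>.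
  The rank-one maps \<open>A\<^sub>k x = (g\<^sub>k x) u\<^sub>k\<^sub>+\<^sub>1\<close> (indices mod \<open>m\<close>) do not increase the seminorm.
  The cyclic product \<open>\<dots> A\<^sub>1 A\<^sub>0\<close> carries \<open>u\<^sub>0\<close> around the \<open>u\<^sub>k\<close> without loss, so it does not
  contract; but a product of period \<open>p < m\<close> must somewhere follow \<open>A\<^sub>k\<close> by some \<open>A\<^sub>j\<close> with
  \<open>j \<noteq> k + 1\<close>, which costs the factor \<open>|g\<^sub>j u\<^sub>k\<^sub>+\<^sub>1| < 1\<close> once and for all.\<close>

section \<open>Seminorms and their unit balls\<close>

lemma seminorm_triangle: "is_seminorm N \<Longrightarrow> N (x + y) \<le> N x + N y"
  by (simp add: is_seminorm_def)

lemma seminorm_scaleR: "is_seminorm N \<Longrightarrow> N (c *\<^sub>R x) = \<bar>c\<bar> * N x"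
  by (simp add: is_seminorm_def)

lemma seminorm_zero: "is_seminorm N \<Longrightarrow> N 0 = 0"
  using seminorm_scaleR[of N 0 0] by simp

lemma seminorm_minus: "is_seminorm N \<Longrightarrow> N (- x) = N x"
  using seminorm_scaleR[of N "-1" x] by simp

lemma seminorm_nonneg:
  assumes "is_seminorm N"
  shows "0 \<le> N x"
  using seminorm_triangle[OF assms, of x "- x"]
  by (simp add: seminorm_zero[OF assms] seminorm_minus[OF assms])

lemma convex_on_seminorm:
  assumes "is_seminorm N"
  shows "convex_on UNIV N"
proof (rule convex_onI)
  fix t :: real and x y assume "0 < t" "t < 1"
  have "N ((1 - t) *\<^sub>R x + t *\<^sub>R y) \<le> N ((1 - t) *\<^sub>R x) + N (t *\<^sub>R y)"
    by (rule seminorm_triangle[OF assms])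
  then show "N ((1 - t) *\<^sub>R x + t *\<^sub>R y) \<le> (1 - t) * N x + t * N y"
    using \<open>0 < t\<close> \<open>t < 1\<close> by (simp add: seminorm_scaleR[OF assms])
qed simp

lemma convex_unit_ball:
  assumes "is_seminorm N"
  shows "convex (unit_ball N)"
  unfolding convex_def unit_ball_def
proof (intro allI ballI impI, simp)
  fix x y and s t :: real
  assume "N x \<le> 1" "N y \<le> 1" "0 \<le> s" "0 \<le> t" "s + t = 1"
  have "N (s *\<^sub>R x + t *\<^sub>R y) \<le> s * N x + t * N y"
    using seminorm_triangle[OF assms, of "s *\<^sub>R x" "t *\<^sub>R y"] \<open>0 \<le> s\<close> \<open>0 \<le> t\<close>
    by (simp add: seminorm_scaleR[OF assms])
  also have "\<dots> \<le> s + t"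
    using \<open>N x \<le> 1\<close> \<open>N y \<le> 1\<close> \<open>0 \<le> s\<close> \<open>0 \<le> t\<close> seminorm_nonneg[OF assms]
    by (intro add_mono mult_right_le_one_le) auto
  finally show "N (s *\<^sub>R x + t *\<^sub>R y) \<le> 1" using \<open>s + t = 1\<close> by simp
qed

lemma uminus_mem_unit_ball:
  "is_seminorm N \<Longrightarrow> x \<in> unit_ball N \<Longrightarrow> - x \<in> unit_ball N"
  by (simp add: unit_ball_def seminorm_minus)

lemma seminorm_less_one_imp_interior:
  fixes N :: "'a::euclidean_space \<Rightarrow> real"
  assumes "is_seminorm N" "N x < 1"
  shows "x \<in> interior (unit_ball N)"
proof -
  have "N -` {..<1} \<subseteq> unit_ball N"
    by (auto simp: unit_ball_def)
  moreover have "open (N -` {..<1})"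
    using convex_on_continuous[OF open_UNIV convex_on_seminorm[OF assms(1)]]
    by (simp add: continuous_on_open_vimage)
  ultimately have "N -` {..<1} \<subseteq> interior (unit_ball N)"
    by (rule interior_maximal)
  then show ?thesis
    using assms(2) by auto
qed

lemma seminorm_eq_one_not_interior:
  fixes N :: "'a::euclidean_space \<Rightarrow> real"
  assumes sn: "is_seminorm N" and "N y = 1"
  shows "y \<notin> interior (unit_ball N)"
proof
  assume "y \<in> interior (unit_ball N)"
  then obtain e where "e > 0" and e: "ball y e \<subseteq> unit_ball N"
    using mem_interior by blast
  have "y \<noteq> 0"
    using \<open>N y = 1\<close> seminorm_zero[OF sn] by auto
  define z where "z = (1 + e / (2 * norm y)) *\<^sub>R y"
  have "y - z = - (e / (2 * norm y)) *\<^sub>R y"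
    by (simp add: z_def algebra_simps)
  then have "dist y z = e / 2"
    using \<open>y \<noteq> 0\<close> \<open>e > 0\<close> by (simp add: dist_norm)
  then have "z \<in> ball y e"
    using \<open>e > 0\<close> by simp
  then have "N z \<le> 1"
    using e by (auto simp: unit_ball_def)
  moreover have "N z = 1 + e / (2 * norm y)"
    using \<open>N y = 1\<close> \<open>e > 0\<close> by (simp add: z_def seminorm_scaleR[OF sn])
  moreover have "e / (2 * norm y) > 0"
    using \<open>e > 0\<close> \<open>y \<noteq> 0\<close> by simp
  ultimately show False
    by linarith
qed

lemma inner_le_seminorm:
  fixes N :: "'a::real_inner \<Rightarrow> real"
  assumes sn: "is_seminorm N" and g: "\<And>x. x \<in> unit_ball N \<Longrightarrow> g \<bullet> x \<le> 1"
  shows "\<bar>g \<bullet> x\<bar> \<le> N x"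
proof -
  have le: "g \<bullet> y \<le> N y" for y
  proof (rule field_le_epsilon)
    fix e :: real assume "0 < e"
    have pos: "0 < N y + e"
      using seminorm_nonneg[OF sn, of y] \<open>0 < e\<close> by linarith
    have "N (inverse (N y + e) *\<^sub>R y) = N y / (N y + e)"
      using pos by (simp add: seminorm_scaleR[OF sn] divide_inverse_commute)
    also have "\<dots> \<le> 1"
      using pos \<open>0 < e\<close> by simp
    finally have "N (inverse (N y + e) *\<^sub>R y) \<le> 1" .
    then have "g \<bullet> (inverse (N y + e) *\<^sub>R y) \<le> 1"
      by (intro g) (simp add: unit_ball_def)
    then show "g \<bullet> y \<le> N y + e"
      using pos by (simp add: field_simps)
  qed
  show ?thesis
    using le[of x] le[of "- x"] by (simp add: seminorm_minus[OF sn])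
qed

section \<open>Proper faces of the unit ball\<close>

lemma proper_face_face_of:
  assumes "convex Q" "proper_face Q F"
  shows "F face_of Q"
  using assms face_of_Int_supporting_hyperplane_le
  unfolding proper_face_def poly_face_def by blast

lemma rel_interior_proper_face_nonempty:
  assumes "convex Q" "proper_face Q F"
  shows "rel_interior F \<noteq> {}"
proof -
  have "convex F"
    using proper_face_face_of[OF assms] by (rule face_of_imp_convex)
  then show ?thesis
    using assms(2) rel_interior_eq_empty unfolding proper_face_def by blast
qed

text \<open>The supporting hyperplane of a proper face of a symmetric ball misses the origin, so it
  can be normalised to level 1.\<close>
lemma proper_face_unit_ball:
  fixes N :: "'a::euclidean_space \<Rightarrow> real"
  assumes sn: "is_seminorm N" and F: "proper_face (unit_ball N) F"
  obtains g where "\<And>x. \<bar>g \<bullet> x\<bar> \<le> N x" "F = unit_ball N \<inter> {x. g \<bullet> x = 1}"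
proof -
  let ?Q = "unit_ball N"
  obtain b c where bc: "\<And>x. x \<in> ?Q \<Longrightarrow> b \<bullet> x \<le> c" and Fbc: "F = ?Q \<inter> {x. b \<bullet> x = c}"
    and "F \<noteq> ?Q"
    using F unfolding proper_face_def poly_face_def by blast
  have "c > 0"
  proof (rule ccontr)
    assume "\<not> c > 0"
    then have "b \<bullet> x = c" if "x \<in> ?Q" for x
      using bc[OF that] bc[OF uminus_mem_unit_ball[OF sn that]]
        bc[of 0] seminorm_zero[OF sn] by (simp add: unit_ball_def)
    then show False
      using \<open>F \<noteq> ?Q\<close> Fbc by auto
  qed
  define g where "g = inverse c *\<^sub>R b"
  have g: "g \<bullet> x = b \<bullet> x / c" for x
    by (simp add: g_def field_simps)
  have g_le: "g \<bullet> x \<le> 1" if "x \<in> ?Q" for x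
    using bc[OF that] \<open>c > 0\<close> by (simp add: g)
  show thesis
  proof
    show "\<bar>g \<bullet> x\<bar> \<le> N x" for x
      by (rule inner_le_seminorm[OF sn g_le])
    show "F = ?Q \<inter> {x. g \<bullet> x = 1}"
      using Fbc \<open>c > 0\<close> by (auto simp: g)
  qed
qed

lemma subset_supporting_face:
  fixes Q :: "'a::euclidean_space set"
  assumes "convex Q" "\<And>x. x \<in> Q \<Longrightarrow> h \<bullet> x \<le> 1"
    and "E \<subseteq> Q" "u \<in> rel_interior E" "h \<bullet> u = 1"
  shows "E \<subseteq> Q \<inter> {x. h \<bullet> x = 1}"
proof (rule subset_of_face_of)
  show "Q \<inter> {x. h \<bullet> x = 1} face_of Q"
    using assms(1,2) by (rule face_of_Int_supporting_hyperplane_le)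
  show "Q \<inter> {x. h \<bullet> x = 1} \<inter> rel_interior E \<noteq> {}"
    using assms(3-5) rel_interior_subset by blast
qed (use assms(3) in blast)

text \<open>A relative interior point of a face \<open>E\<close> lies on the face \<open>{g = \<plusminus>1}\<close> only if all of \<open>E\<close> does.\<close>
lemma inner_less_one_if_double_face_not_subset:
  fixes N :: "'a::euclidean_space \<Rightarrow> real"
  assumes sn: "is_seminorm N"
    and g: "\<And>x. \<bar>g \<bullet> x\<bar> \<le> N x" and F: "F = unit_ball N \<inter> {x. g \<bullet> x = 1}"
    and E: "E \<subseteq> unit_ball N" "u \<in> rel_interior E"
    and not_sub: "\<not> E \<union> uminus ` E \<subseteq> F \<union> uminus ` F"
  shows "\<bar>g \<bullet> u\<bar> < 1"
proof (rule ccontr)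
  let ?Q = "unit_ball N"
  have g_le: "g \<bullet> x \<le> 1" "(- g) \<bullet> x \<le> 1" if "x \<in> ?Q" for x
    using g[of x] that by (auto simp: unit_ball_def)
  assume "\<not> \<bar>g \<bullet> u\<bar> < 1"
  moreover have "u \<in> ?Q"
    using E rel_interior_subset by blast
  then have "\<bar>g \<bullet> u\<bar> \<le> 1"
    using g_le by (auto simp: abs_le_iff)
  ultimately consider "g \<bullet> u = 1" | "(- g) \<bullet> u = 1"
    by (auto simp: abs_if split: if_splits)
  then show False
  proof cases
    case 1
    have "E \<subseteq> F"
      unfolding F using convex_unit_ball[OF sn] _ E 1
      by (rule subset_supporting_face) (use g_le in blast)
    then show False
      using not_sub by blast
  next
    case 2
    have "E \<subseteq> ?Q \<inter> {x. (- g) \<bullet> x = 1}"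
      using convex_unit_ball[OF sn] _ E 2
      by (rule subset_supporting_face) (use g_le in blast)
    also have "\<dots> \<subseteq> uminus ` F"
      using uminus_mem_unit_ball[OF sn] by (force simp: F)
    finally have "E \<subseteq> uminus ` F" .
    then show False
      using not_sub by force
  qed
qed

section \<open>Antichains of double-faces\<close>

lemma finite_double_face_lattice:
  fixes Q :: "'a::euclidean_space set"
  assumes "polyhedron Q"
  shows "finite (double_face_lattice Q)"
proof (rule finite_subset)
  show "double_face_lattice Q \<subseteq> (\<lambda>F. F \<union> uminus ` F) ` {F. F face_of Q} \<union> {Q, {}}"
    using proper_face_face_of[OF polyhedron_imp_convex[OF assms]]
    unfolding double_face_lattice_def by blast
  show "finite ((\<lambda>F. F \<union> uminus ` F) ` {F. F face_of Q} \<union> {Q, {}})"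
    using finite_polyhedron_faces[OF assms] by simp
qed

lemma W_attained:
  fixes Q :: "'a::euclidean_space set"
  assumes "polyhedron Q"
  obtains A where "A \<subseteq> double_face_lattice Q" "is_antichain A" "card A = W Q"
proof -
  let ?S = "{card A | A. A \<subseteq> double_face_lattice Q \<and> is_antichain A}"
  have "?S \<subseteq> {..card (double_face_lattice Q)}"
    using card_mono[OF finite_double_face_lattice[OF assms]] by auto
  then have "finite ?S"
    by (rule finite_subset) simp
  moreover have "card {} \<in> ?S"
    by (rule CollectI, rule exI[of _ "{}"]) (simp add: is_antichain_def)
  ultimately have "Max ?S \<in> ?S"
    by (intro Max_in) auto
  then show thesis
    using that unfolding W_def by auto
qed

text \<open>In an antichain with at least two members neither \<open>Q\<close> nor \<open>{}\<close> can occur, since they are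
  comparable with everything.\<close>
lemma antichain_member_double_face:
  fixes Q :: "'a::euclidean_space set"
  assumes sym: "\<And>x. x \<in> Q \<Longrightarrow> - x \<in> Q"
    and A: "A \<subseteq> double_face_lattice Q" "is_antichain A" "2 \<le> card A" and "G \<in> A"
  obtains F where "proper_face Q F" "G = F \<union> uminus ` F"
proof -
  have sub: "G' \<subseteq> Q" if "G' \<in> double_face_lattice Q" for G'
    using that sym unfolding double_face_lattice_def proper_face_def poly_face_def by blast
  have "\<not> A \<subseteq> {G}"
    using \<open>2 \<le> card A\<close> card_mono[of "{G}" A] by auto
  then obtain G' where "G' \<in> A" "G' \<noteq> G"
    by blast
  then have "\<not> G' \<subseteq> G" "\<not> G \<subseteq> G'"
    using A(2) \<open>G \<in> A\<close> unfolding is_antichain_def by blast+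
  then have "G \<noteq> Q" "G \<noteq> {}"
    using sub \<open>G' \<in> A\<close> A(1) by blast+
  then show thesis
    using that A(1) \<open>G \<in> A\<close> unfolding double_face_lattice_def by blast
qed

lemma antichain_of_proper_double_faces:
  fixes Q :: "'a::euclidean_space set"
  assumes "polyhedron Q" "\<And>x. x \<in> Q \<Longrightarrow> - x \<in> Q" "2 \<le> W Q"
  obtains F where "\<And>k. k < W Q \<Longrightarrow> proper_face Q (F k)"
    and "\<And>j k. j < W Q \<Longrightarrow> k < W Q \<Longrightarrow> j \<noteq> k \<Longrightarrow> \<not> F k \<union> uminus ` F k \<subseteq> F j \<union> uminus ` F j"
proof -
  obtain A where A: "A \<subseteq> double_face_lattice Q" "is_antichain A" "card A = W Q"
    using W_attained[OF assms(1)] by blast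
  then have "finite A"
    using assms(3) by (intro card_ge_0_finite) simp
  then have "\<exists>h. bij_betw h {0..<W Q} A"
    by (metis ex_bij_betw_nat_finite A(3))
  then obtain h where h: "bij_betw h {0..<W Q} A"
    by blast
  have "2 \<le> card A"
    using A(3) assms(3) by simp
  have "\<exists>F. proper_face Q F \<and> h k = F \<union> uminus ` F" if "k < W Q" for k
  proof -
    have "h k \<in> A"
      using h that by (auto simp: bij_betw_def)
    with \<open>2 \<le> card A\<close> show ?thesis
      using antichain_member_double_face[OF assms(2) A(1,2)] by metis
  qed
  then obtain F where F: "\<And>k. k < W Q \<Longrightarrow> proper_face Q (F k) \<and> h k = F k \<union> uminus ` F k"
    by metis
  show thesis
  proof (rule that)
    show "proper_face Q (F k)" if "k < W Q" for k
      using F[OF that] by blast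
    show "\<not> F k \<union> uminus ` F k \<subseteq> F j \<union> uminus ` F j" if "j < W Q" "k < W Q" "j \<noteq> k" for j k
    proof -
      have "h k \<noteq> h j" "h k \<in> A" "h j \<in> A"
        using h that unfolding bij_betw_def inj_on_def by auto
      then show ?thesis
        using A(2) F that unfolding is_antichain_def by metis
    qed
  qed
qed

section \<open>Products of rank-one matrices\<close>

definition outer :: "real^'n \<Rightarrow> real^'n \<Rightarrow> real^'n^'n" where
  "outer u g = (\<chi> i j. u$i * g$j)"

lemma outer_mult_vec: "outer u g *v x = (g \<bullet> x) *\<^sub>R u"
  by (auto simp: outer_def vec_eq_iff matrix_vector_mult_def inner_vec_def sum_distrib_left
      mult_ac intro!: sum.cong)

lemma lprod_Suc_mult_vec: "lprod M (Suc t) *v x = M t *v (lprod M t *v x)"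
  by (simp add: matrix_vector_mul_assoc)

lemma seminorm_lprod_le:
  assumes "nonincreasing_for N \<Sigma>" "range M \<subseteq> \<Sigma>"
  shows "N (lprod M t *v x) \<le> N x"
proof (induction t)
  case (Suc t)
  have "N (M t *v (lprod M t *v x)) \<le> N (lprod M t *v x)"
    using assms unfolding nonincreasing_for_def by blast
  with Suc show ?case
    unfolding lprod_Suc_mult_vec by linarith
qed simp

lemma contracts_if_lprod_le:
  assumes sn: "is_seminorm N" and "0 \<le> c" "c < 1" and le: "\<And>x. N (lprod M t *v x) \<le> c * N x"
  shows "contracts M N"
  unfolding contracts_def
proof (intro exI[of _ t] image_subsetI seminorm_less_one_imp_interior[OF sn])
  fix x assume "x \<in> unit_ball N"
  then have "c * N x < 1"
    using \<open>0 \<le> c\<close> \<open>c < 1\<close> mult_left_le[of "N x" c] by (simp add: unit_ball_def)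
  then show "N (lprod M t *v x) < 1"
    using le[of x] by linarith
qed

lemma not_contracts_if_orbit_seminorm_one:
  assumes sn: "is_seminorm N" and "\<And>t. N (lprod M t *v y) = 1"
  shows "\<not> contracts M N"
proof
  assume "contracts M N"
  then obtain t where "(\<lambda>x. lprod M t *v x) ` unit_ball N \<subseteq> interior (unit_ball N)"
    unfolding contracts_def by blast
  moreover have "y \<in> unit_ball N"
    using assms(2)[of 0] by (simp add: unit_ball_def)
  ultimately show False
    using seminorm_eq_one_not_interior[OF sn assms(2)] by blast
qed

lemma identity_not_contracts:
  fixes N :: "real^'n \<Rightarrow> real"
  assumes sn: "is_seminorm N" and "\<exists>x. N x \<noteq> 0"
  shows "\<not> contracts (\<lambda>_. mat 1) N"
proof -
  obtain x where "N x \<noteq> 0"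
    using assms(2) by blast
  then have "N (inverse (N x) *\<^sub>R x) = 1"
    using seminorm_nonneg[OF sn, of x] by (simp add: seminorm_scaleR[OF sn])
  moreover have "lprod (\<lambda>_. mat 1) t *v y = y" for t and y :: "real^'n"
    by (induction t) (simp_all add: lprod_Suc_mult_vec matrix_vector_mul_lid)
  ultimately show ?thesis
    by (intro not_contracts_if_orbit_seminorm_one[OF sn, where y = "inverse (N x) *\<^sub>R x"]) simp
qed

lemma periodic_sequence_leaves_cycle:
  fixes \<sigma> :: "nat \<Rightarrow> nat"
  assumes "periodic_with \<sigma> p" "0 < p" "p < m" "\<sigma> 0 < m"
  obtains s where "\<sigma> (Suc s) \<noteq> Suc (\<sigma> s) mod m"
proof (rule ccontr)
  assume "\<not> thesis"
  then have step: "\<sigma> (Suc s) = Suc (\<sigma> s) mod m" for s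
    using that by blast
  have closed: "\<sigma> s = (\<sigma> 0 + s) mod m" for s
  proof (induction s)
    case (Suc s)
    then show ?case
      by (simp only: step mod_Suc_eq add_Suc_right)
  qed (simp add: \<open>\<sigma> 0 < m\<close>)
  have "\<sigma> p = \<sigma> 0"
    using spec[OF assms(1)[unfolded periodic_with_def], of 0] by simp
  then have "(\<sigma> 0 + p) mod m = \<sigma> 0 mod m"
    using closed[of p] assms(4) by simp
  then have "m dvd p"
    using mod_eq_dvd_iff_nat[of "\<sigma> 0" "\<sigma> 0 + p" m] by simp
  then show False
    using assms(2,3) nat_dvd_not_less by blast
qed

section \<open>The cyclic rank-one system\<close>

locale cyclic_face_system =
  fixes N :: "real^'n \<Rightarrow> real" and m :: nat and u g :: "nat \<Rightarrow> real^'n"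
  assumes seminorm: "is_seminorm N"
    and m_pos: "0 < m"
    and u_le_one: "\<And>k. k < m \<Longrightarrow> N (u k) \<le> 1"
    and g_le: "\<And>k x. k < m \<Longrightarrow> \<bar>g k \<bullet> x\<bar> \<le> N x"
    and g_u: "\<And>k. k < m \<Longrightarrow> g k \<bullet> u k = 1"
    and g_u_cross: "\<And>j k. j < m \<Longrightarrow> k < m \<Longrightarrow> j \<noteq> k \<Longrightarrow> \<bar>g j \<bullet> u k\<bar> < 1"
begin

definition cycle_matrix :: "nat \<Rightarrow> real^'n^'n" where
  "cycle_matrix k = outer (u (Suc k mod m)) (g k)"

definition cycle_matrices :: "(real^'n^'n) set" where
  "cycle_matrices = cycle_matrix ` {..<m}"

lemma cycle_matrix_mult_vec: "cycle_matrix k *v x = (g k \<bullet> x) *\<^sub>R u (Suc k mod m)"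
  by (simp add: cycle_matrix_def outer_mult_vec)

lemma seminorm_u: "k < m \<Longrightarrow> N (u k) = 1"
  using u_le_one g_le[of k "u k"] g_u by force

lemma seminorm_cycle_matrix_mult_vec: "N (cycle_matrix k *v x) = \<bar>g k \<bullet> x\<bar>"
proof -
  have "Suc k mod m < m"
    using m_pos by simp
  then show ?thesis
    by (simp add: cycle_matrix_mult_vec seminorm_scaleR[OF seminorm] seminorm_u)
qed

lemma nonincreasing_cycle_matrices: "nonincreasing_for N cycle_matrices"
  by (auto simp: nonincreasing_for_def cycle_matrices_def seminorm_cycle_matrix_mult_vec g_le)

lemma inj_on_cycle_matrix: "inj_on cycle_matrix {..<m}"
proof (rule inj_onI, rule ccontr)
  fix j k assume "j \<in> {..<m}" "k \<in> {..<m}" "cycle_matrix j = cycle_matrix k" "j \<noteq> k"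
  then have "N (cycle_matrix j *v u j) = N (cycle_matrix k *v u j)"
    by simp
  then show False
    using g_u g_u_cross[of k j] \<open>j \<in> {..<m}\<close> \<open>k \<in> {..<m}\<close> \<open>j \<noteq> k\<close>
    by (simp add: seminorm_cycle_matrix_mult_vec)
qed

lemma seminorm_cycle_matrix_twice:
  "N (cycle_matrix j *v (cycle_matrix k *v x)) \<le> \<bar>g j \<bullet> u (Suc k mod m)\<bar> * N x" if "k < m"
proof -
  have "N (cycle_matrix j *v (cycle_matrix k *v x)) = \<bar>g j \<bullet> u (Suc k mod m)\<bar> * \<bar>g k \<bullet> x\<bar>"
    unfolding seminorm_cycle_matrix_mult_vec by (simp add: cycle_matrix_mult_vec abs_mult)
  then show ?thesis
    using g_le[OF that, of x] by (simp add: mult_left_mono)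
qed

lemma contracts_if_leaves_cycle:
  assumes M: "\<And>i. M i = cycle_matrix (\<sigma> i)" "\<And>i. \<sigma> i < m"
    and leave: "\<sigma> (Suc s) \<noteq> Suc (\<sigma> s) mod m"
  shows "contracts M N"
proof (rule contracts_if_lprod_le[OF seminorm])
  let ?c = "\<bar>g (\<sigma> (Suc s)) \<bullet> u (Suc (\<sigma> s) mod m)\<bar>"
  show "0 \<le> ?c"
    by simp
  show "?c < 1"
    using g_u_cross[OF M(2) _ leave] m_pos by simp
  have "range M \<subseteq> cycle_matrices"
    using M by (auto simp: cycle_matrices_def)
  show "N (lprod M (Suc (Suc s)) *v x) \<le> ?c * N x" for x
  proof -
    have "N (lprod M (Suc (Suc s)) *v x) \<le> ?c * N (lprod M s *v x)"
      unfolding lprod_Suc_mult_vec M(1) by (rule seminorm_cycle_matrix_twice[OF M(2)])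
    also have "\<dots> \<le> ?c * N x"
      using seminorm_lprod_le[OF nonincreasing_cycle_matrices \<open>range M \<subseteq> cycle_matrices\<close>]
      by (rule mult_left_mono) simp
    finally show ?thesis .
  qed
qed

lemma periodic_contracts:
  assumes "range M \<subseteq> cycle_matrices" "periodic_with M p" "0 < p" "p < m"
  shows "contracts M N"
proof -
  have "\<forall>i. \<exists>k. k < m \<and> M i = cycle_matrix k"
    using assms(1) unfolding cycle_matrices_def by blast
  then obtain \<sigma> where \<sigma>: "\<And>i. \<sigma> i < m" "\<And>i. M i = cycle_matrix (\<sigma> i)"
    by (metis choice)
  have "\<sigma> (i + p) = \<sigma> i" for i
  proof (rule inj_onD[OF inj_on_cycle_matrix])
    show "cycle_matrix (\<sigma> (i + p)) = cycle_matrix (\<sigma> i)"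
      using assms(2) \<sigma>(2)[of i] \<sigma>(2)[of "i + p"] unfolding periodic_with_def by simp
  qed (use \<sigma>(1) in auto)
  then have "periodic_with \<sigma> p"
    unfolding periodic_with_def by blast
  then obtain s where "\<sigma> (Suc s) \<noteq> Suc (\<sigma> s) mod m"
    using periodic_sequence_leaves_cycle assms(3,4) \<sigma>(1) by blast
  then show ?thesis
    using contracts_if_leaves_cycle \<sigma> by blast
qed

lemma lprod_cycle_u: "lprod (\<lambda>i. cycle_matrix (i mod m)) t *v u 0 = u (t mod m)"
proof (induction t)
  case (Suc t)
  have "t mod m < m"
    using m_pos by simp
  then show ?case
    unfolding lprod_Suc_mult_vec Suc.IH cycle_matrix_mult_vec by (simp add: g_u mod_Suc_eq)
qed simp

lemma cycle_not_contracts: "\<not> contracts (\<lambda>i. cycle_matrix (i mod m)) N"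
  using m_pos
  by (intro not_contracts_if_orbit_seminorm_one[OF seminorm, where y = "u 0"])
    (simp add: lprod_cycle_u seminorm_u)

lemma periodic_but_not_all_products_contract:
  "\<exists>\<Sigma> :: (real^'n^'n) set.
     nonincreasing_for N \<Sigma> \<and>
     (\<forall>M. range M \<subseteq> \<Sigma> \<longrightarrow> (\<exists>p. 0 < p \<and> p < m \<and> periodic_with M p) \<longrightarrow> contracts M N) \<and>
     \<not> (\<forall>M. range M \<subseteq> \<Sigma> \<longrightarrow> contracts M N)"
proof -
  have "range (\<lambda>i. cycle_matrix (i mod m)) \<subseteq> cycle_matrices"
    using m_pos by (auto simp: cycle_matrices_def)
  then show ?thesis
    using nonincreasing_cycle_matrices periodic_contracts cycle_not_contracts by blast
qed

end

lemma cyclic_face_system_from_antichain: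
  fixes N :: "real^'n \<Rightarrow> real"
  assumes "polyhedral_seminorm N" "2 \<le> W (unit_ball N)"
  obtains u g where "cyclic_face_system N (W (unit_ball N)) u g"
proof -
  let ?Q = "unit_ball N"
  let ?m = "W ?Q"
  have sn: "is_seminorm N" and poly: "polyhedron ?Q"
    using assms(1) by (auto simp: polyhedral_seminorm_def)
  obtain F where F: "\<And>k. k < ?m \<Longrightarrow> proper_face ?Q (F k)"
    and incomparable: "\<And>j k. j < ?m \<Longrightarrow> k < ?m \<Longrightarrow> j \<noteq> k \<Longrightarrow>
      \<not> F k \<union> uminus ` F k \<subseteq> F j \<union> uminus ` F j"
    using antichain_of_proper_double_faces[OF poly uminus_mem_unit_ball[OF sn] assms(2)] by blast
  have "\<exists>g u. (\<forall>x. \<bar>g \<bullet> x\<bar> \<le> N x) \<and> F k = ?Q \<inter> {x. g \<bullet> x = 1} \<and> u \<in> rel_interior (F k)"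
    if k: "k < ?m" for k
  proof -
    obtain g where "\<And>x. \<bar>g \<bullet> x\<bar> \<le> N x" "F k = ?Q \<inter> {x. g \<bullet> x = 1}"
      using proper_face_unit_ball[OF sn F[OF k]] by blast
    moreover obtain u where "u \<in> rel_interior (F k)"
      using rel_interior_proper_face_nonempty[OF convex_unit_ball[OF sn] F[OF k]] by blast
    ultimately show ?thesis
      by blast
  qed
  then obtain g u where g: "\<And>k x. k < ?m \<Longrightarrow> \<bar>g k \<bullet> x\<bar> \<le> N x"
    and Fg: "\<And>k. k < ?m \<Longrightarrow> F k = ?Q \<inter> {x. g k \<bullet> x = 1}"
    and u: "\<And>k. k < ?m \<Longrightarrow> u k \<in> rel_interior (F k)"
    by metis
  have uF: "u k \<in> F k" if "k < ?m" for k
    using u[OF that] rel_interior_subset by blast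
  show thesis
  proof (rule that, unfold_locales)
    show "0 < ?m"
      using assms(2) by simp
    show "N (u k) \<le> 1" "g k \<bullet> u k = 1" if "k < ?m" for k
      using uF[OF that] Fg[OF that] by (auto simp: unit_ball_def)
    show "\<bar>g j \<bullet> u k\<bar> < 1" if "j < ?m" "k < ?m" "j \<noteq> k" for j k
    proof (rule inner_less_one_if_double_face_not_subset[OF sn g Fg _ u])
      show "F k \<subseteq> ?Q"
        using Fg[OF that(2)] by blast
    qed (use that incomparable in auto)
  qed (use sn g in auto)
qed

theorem theorem2:
  fixes N :: "real^'n \<Rightarrow> real"
  assumes "polyhedral_seminorm N"
    and "\<exists>x. N x \<noteq> 0"
  shows "\<exists>\<Sigma> :: (real^'n^'n) set.
           nonincreasing_for N \<Sigma> \<and>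
           (\<forall>M. range M \<subseteq> \<Sigma> \<longrightarrow>
                (\<exists>p. 0 < p \<and> p < W (unit_ball N) \<and> periodic_with M p) \<longrightarrow>
                contracts M N) \<and>
           \<not> (\<forall>M. range M \<subseteq> \<Sigma> \<longrightarrow> contracts M N)"
proof (cases "2 \<le> W (unit_ball N)")
  case True
  then obtain u g where "cyclic_face_system N (W (unit_ball N)) u g"
    using cyclic_face_system_from_antichain assms(1) by blast
  then show ?thesis
    by (rule cyclic_face_system.periodic_but_not_all_products_contract)
next
  case False
  \<comment> \<open>no period \<open>0 < p < W\<close> exists, so the identity alone is a witness\<close>
  have "is_seminorm N"
    using assms(1) by (simp add: polyhedral_seminorm_def)
  then have "\<not> contracts (\<lambda>_. mat 1) N"
    using assms(2) by (rule identity_not_contracts)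
  then show ?thesis
    using False by (intro exI[of _ "{mat 1}"]) (auto simp: nonincreasing_for_def)
qed

end
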